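(* For any $z\in\mathbb{R}^d$, $R>0$, $x\in B_{d,1}(z,R)$ and $0\le r\le 2R/(d+2)$, $$\lambda\big[B_{d,1}(z,R)\cap B_{d,2}(x,r)\big]\ge\frac{V_{d,1}}{V_{d,2}\,2^d}\,\lambda\big[B_{d,2}(x,r)\big].$$
   Context: $\lambda$ is Lebesgue measure on $\mathbb{R}^d$. For $p\ge1$, $B_{d,p}(x,r)=\{y\in\mathbb{R}^d:\sum_{j=1}^d|y_j-x_j|^p\le r^p\}$ is the closed $\ell_p$ ball, and $V_{d,p}=\lambda[B_{d,p}(0,1)]$. *)

theory Defs
  imports "HOL-Analysis.Analysis"
begin

text \<open>Closed l_p ball in R^d, with R^d rendered as real^'n (d = CARD('n)).\<close>
definition lp_ball :: "real \<Rightarrow> real^'n \<Rightarrow> real \<Rightarrow> (real^'n) set" where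
  "lp_ball p x r = {y. (\<Sum>j\<in>UNIV. \<bar>y $ j - x $ j\<bar> powr p) \<le> r powr p}"

definition lp_vol :: "real \<Rightarrow> ('n::finite) itself \<Rightarrow> real" where
  "lp_vol p _ = measure lborel (lp_ball p (0::real^'n::finite) 1)"

end

theory Submission
  imports Defs
begin

text \<open>Put \<open>t = r / (2 R)\<close> and \<open>w = x + t (z - x)\<close>. By the triangle inequality for the
  \<open>\<ell>\<^sub>1\<close> norm, the \<open>\<ell>\<^sub>1\<close> ball of radius \<open>r/2\<close> about \<open>w\<close> lies in \<open>B\<^sub>1(z, R)\<close>, and since the
  Euclidean norm is dominated by the \<open>\<ell>\<^sub>1\<close> norm it also lies in \<open>B\<^sub>2(x, r)\<close>. Its volume
  \<open>(r/2)\<^sup>d V\<^sub>1\<close> is exactly the right-hand side, because \<open>\<lambda>(B\<^sub>2(x, r)) = r\<^sup>d V\<^sub>2\<close>.\<close>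

definition l1_norm :: "real^'n \<Rightarrow> real" where
  "l1_norm v = (\<Sum>j\<in>UNIV. \<bar>v $ j\<bar>)"

lemma l1_norm_triangle_ineq: "l1_norm (a + b) \<le> l1_norm a + l1_norm b"
  unfolding l1_norm_def sum.distrib[symmetric] by (rule sum_mono) (simp add: abs_triangle_ineq)

lemma l1_norm_scaleR: "l1_norm (c *\<^sub>R v) = \<bar>c\<bar> * l1_norm v"
  unfolding l1_norm_def by (simp add: abs_mult sum_distrib_left)

lemma l1_norm_minus_commute: "l1_norm (a - b) = l1_norm (b - a)"
  unfolding l1_norm_def by (simp add: abs_minus_commute)

lemma norm_le_l1_norm: "norm v \<le> l1_norm v"
  unfolding l1_norm_def by (rule norm_le_l1_cart)

lemma lp_ball_1_eq: "r \<ge> 0 \<Longrightarrow> lp_ball 1 x r = {y. l1_norm (y - x) \<le> r}"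
  unfolding lp_ball_def l1_norm_def by simp

lemma lp_ball_2_eq_cball:
  assumes "r \<ge> 0"
  shows "lp_ball 2 x r = cball x r"
proof -
  have "(\<Sum>j\<in>UNIV. \<bar>y $ j - x $ j\<bar> powr 2) \<le> r powr 2 \<longleftrightarrow> (dist y x)\<^sup>2 \<le> r\<^sup>2" for y
  proof -
    have "(\<Sum>j\<in>UNIV. \<bar>y $ j - x $ j\<bar> powr 2) = (dist y x)\<^sup>2"
      unfolding dist_norm norm_vec_def L2_set_def
      by (simp add: powr_numeral sum_nonneg)
    moreover have "r powr 2 = r\<^sup>2"
      using assms by (simp add: powr_numeral)
    ultimately show ?thesis
      by (simp only:)
  qed
  also have "(dist y x)\<^sup>2 \<le> r\<^sup>2 \<longleftrightarrow> y \<in> cball x r" for y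
    using assms by (simp add: power2_le_iff_abs_le dist_commute)
  finally show ?thesis
    unfolding lp_ball_def by blast
qed

lemma closed_lp_ball_1: "r \<ge> 0 \<Longrightarrow> closed (lp_ball 1 x r)"
  unfolding lp_ball_1_eq l1_norm_def by (intro closed_Collect_le continuous_intros)

lemma lp_ball_1_eq_affine_image:
  assumes "\<rho> > 0"
  shows "lp_ball 1 w \<rho> = (\<lambda>y. \<rho> *\<^sub>R y + w) ` lp_ball 1 (0::real^'n) 1"
proof (intro set_eqI iffI)
  fix y assume "y \<in> lp_ball 1 w \<rho>"
  then have y: "l1_norm (y - w) \<le> \<rho>"
    using assms by (simp add: lp_ball_1_eq)
  let ?u = "(1 / \<rho>) *\<^sub>R (y - w)"
  have "y = \<rho> *\<^sub>R ?u + w"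
    using assms by simp
  moreover have "?u \<in> lp_ball 1 0 1"
    using y assms by (simp add: lp_ball_1_eq l1_norm_scaleR)
  ultimately show "y \<in> (\<lambda>y. \<rho> *\<^sub>R y + w) ` lp_ball 1 0 1"
    by (rule image_eqI)
next
  fix y assume "y \<in> (\<lambda>y. \<rho> *\<^sub>R y + w) ` lp_ball 1 (0::real^'n) 1"
  then obtain u where u: "l1_norm u \<le> 1" and y: "y = \<rho> *\<^sub>R u + w"
    by (auto simp: lp_ball_1_eq)
  have "l1_norm (y - w) = \<rho> * l1_norm u"
    using y assms by (simp add: l1_norm_scaleR)
  also have "\<dots> \<le> \<rho>"
    using u assms by (simp add: mult_left_le)
  finally show "y \<in> lp_ball 1 w \<rho>"
    using assms by (simp add: lp_ball_1_eq)
qed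

lemma measure_lp_ball_1:
  assumes "\<rho> > 0"
  shows "measure lborel (lp_ball 1 (w::real^'n::finite) \<rho>) = \<rho> ^ CARD('n) * lp_vol 1 TYPE('n)"
proof -
  have borel: "lp_ball 1 v s \<in> sets borel" if "s \<ge> 0" for v :: "real^'n" and s :: real
    using closed_lp_ball_1[OF that] by (rule borel_closed)
  have "measure lborel (lp_ball 1 w \<rho>)
      = measure lebesgue ((\<lambda>y. \<rho> *\<^sub>R y + w) ` lp_ball 1 (0::real^'n) 1)"
    using borel[of \<rho> w] assms by (simp add: lp_ball_1_eq_affine_image[OF assms])
  also have "\<dots> = \<bar>\<rho>\<bar> ^ DIM(real^'n) * measure lebesgue (lp_ball 1 (0::real^'n) 1)"
    by (rule measure_lebesgue_affine)
  finally show ?thesis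
    using borel[of 1 0] assms by (simp add: lp_vol_def)
qed

lemma lp_vol_2_eq_unit_ball_vol: "lp_vol 2 TYPE('n::finite) = unit_ball_vol (CARD('n))"
  using content_cball[of 1 "0::real^'n"] by (simp add: lp_vol_def lp_ball_2_eq_cball)

lemma measure_lp_ball_2:
  assumes "r \<ge> 0"
  shows "measure lborel (lp_ball 2 (x::real^'n::finite) r) = r ^ CARD('n) * lp_vol 2 TYPE('n)"
  using content_cball[OF assms, of x]
  by (simp add: lp_ball_2_eq_cball[OF assms] lp_vol_2_eq_unit_ball_vol)

lemma l1_ball_subset_inter_lp_balls:
  assumes "R > 0" and "x \<in> lp_ball 1 z R" and "0 \<le> r" and "r \<le> 2 * R"
  defines "w \<equiv> x + (r / (2 * R)) *\<^sub>R (z - x)"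
  shows "lp_ball 1 w (r / 2) \<subseteq> lp_ball 1 z R \<inter> lp_ball 2 x r"
proof
  define t where "t = r / (2 * R)"
  have t: "0 \<le> t" "t \<le> 1" "t * R = r / 2"
    using assms(1,3,4) by (auto simp: t_def)
  have xz: "l1_norm (z - x) \<le> R"
    using assms(1,2) by (simp add: lp_ball_1_eq l1_norm_minus_commute)
  fix y assume "y \<in> lp_ball 1 w (r / 2)"
  then have yw: "l1_norm (y - w) \<le> r / 2"
    using assms(3) by (simp add: lp_ball_1_eq)
  have "l1_norm (y - z) \<le> l1_norm (y - w) + l1_norm (w - z)"
    using l1_norm_triangle_ineq[of "y - w" "w - z"] by simp
  also have "w - z = (1 - t) *\<^sub>R (x - z)"
    by (simp add: w_def t_def algebra_simps)
  also have "l1_norm (y - w) + l1_norm ((1 - t) *\<^sub>R (x - z)) \<le> r / 2 + (1 - t) * R"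
    using yw mult_left_mono[OF xz, of "1 - t"] t(2)
    by (simp add: l1_norm_scaleR l1_norm_minus_commute[of x])
  also have "\<dots> = R"
    using t(3) by (simp add: algebra_simps)
  finally have "y \<in> lp_ball 1 z R"
    using assms(1) by (simp add: lp_ball_1_eq)
  moreover have "norm (y - x) \<le> r"
  proof -
    have "norm (y - x) \<le> l1_norm (y - w) + l1_norm (w - x)"
      using norm_triangle_ineq[of "y - w" "w - x"] norm_le_l1_norm[of "y - w"]
        norm_le_l1_norm[of "w - x"] by simp
    also have "w - x = t *\<^sub>R (z - x)"
      by (simp add: w_def t_def)
    also have "l1_norm (y - w) + l1_norm (t *\<^sub>R (z - x)) \<le> r / 2 + t * R"
      using yw mult_left_mono[OF xz t(1)] t(1) by (simp add: l1_norm_scaleR)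
    finally show ?thesis
      using t(3) by simp
  qed
  ultimately show "y \<in> lp_ball 1 z R \<inter> lp_ball 2 x r"
    using assms(3) by (simp add: lp_ball_2_eq_cball dist_norm norm_minus_commute)
qed

theorem lemmaC1:
  fixes z x :: "real^'n::finite" and R r :: real
  assumes "R > 0" and "x \<in> lp_ball 1 z R"
    and "0 \<le> r" and "r \<le> 2 * R / (real CARD('n) + 2)"
  shows "measure lborel (lp_ball 1 z R \<inter> lp_ball 2 x r)
    \<ge> lp_vol 1 TYPE('n) / (lp_vol 2 TYPE('n) * 2 ^ CARD('n)) * measure lborel (lp_ball 2 x r)"
proof -
  have "lp_vol 2 TYPE('n) > 0"
    by (simp add: lp_vol_2_eq_unit_ball_vol)
  then have rhs: "lp_vol 1 TYPE('n) / (lp_vol 2 TYPE('n) * 2 ^ CARD('n))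
      * measure lborel (lp_ball 2 x r) = (r / 2) ^ CARD('n) * lp_vol 1 TYPE('n)"
    using assms(3) by (simp add: measure_lp_ball_2 power_divide field_simps)
  show ?thesis
  proof (cases "r = 0")
    case True
    then show ?thesis
      unfolding rhs by (simp add: zero_power)
  next
    case False
    define w where "w = x + (r / (2 * R)) *\<^sub>R (z - x)"
    have "2 * R / (real CARD('n) + 2) \<le> 2 * R"
      using assms(1) by (simp add: divide_le_eq)
    then have subset: "lp_ball 1 w (r / 2) \<subseteq> lp_ball 1 z R \<inter> lp_ball 2 x r"
      unfolding w_def using assms by (intro l1_ball_subset_inter_lp_balls) simp_all
    have "compact (lp_ball 1 z R \<inter> lp_ball 2 x r)"
      unfolding lp_ball_2_eq_cball[OF assms(3)]
      using assms(1) by (intro closed_Int_compact closed_lp_ball_1 compact_cball) simp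
    then have "measure lborel (lp_ball 1 w (r / 2)) \<le> measure lborel (lp_ball 1 z R \<inter> lp_ball 2 x r)"
      using assms(3) subset
      by (intro measure_mono_fmeasurable) (simp_all add: borel_closed closed_lp_ball_1 fmeasurable_compact)
    then show ?thesis
      unfolding rhs using measure_lp_ball_1[of "r / 2" w] assms(3) False by simp
  qed
qed

end
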